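(* For every integer $m\ge 0$, $$\int_0^{\pi/2}x^{2m}\ln(\sin x)\,dx=(2m)!\sum_{j=0}^m\frac{(-1)^{j-1}\,\eta(2j+1)}{2^{2j}(2m-2j+1)!}\left(\frac{\pi}{2}\right)^{2m-2j+1}.$$
   Context: $\eta$ denotes the Dirichlet eta function, $\eta(s)=\sum_{n=1}^\infty\frac{(-1)^{n-1}}{n^s}$; in particular $\eta(1)=\ln 2$. *)

theory Defs
  imports "HOL-Analysis.Analysis"
begin

text \<open>Dirichlet eta function for real arguments: eta s = sum over n >= 1 of (-1)^(n-1) / n^s.
  Indexed from n = 0 as (-1)^n / (n+1)^s.\<close>
definition dirichlet_eta :: "real \<Rightarrow> real" where
  "dirichlet_eta s = (\<Sum>n. (-1) ^ n / (real (Suc n)) powr s)"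

end

theory Submission
  imports Defs "HOL-Real_Asymp.Real_Asymp"
begin

text \<open>For \<open>\<bar>r\<bar> < 1\<close> the Abel-regularised Fourier series of \<open>ln (2 sin x)\<close>,
  \<open>\<Sum>n\<ge>1. r ^ n cos (2 n x) / n = - ln (1 - 2 r cos (2 x) + r\<^sup>2) / 2\<close>,
  converges uniformly on \<open>[0, pi / 2]\<close>, so it can be integrated termwise against
  \<open>x ^ (2 m)\<close>. Two integrations by parts give a recursion for \<open>\<integral> x ^ (2 m) cos (2 n x)\<close>
  whose solution is \<open>(-1) ^ n \<Sum>j=1..m. log_sine_coeff m j / n ^ (2 j)\<close>, so the integral is
  \<open>- \<Sum>j=1..m. log_sine_coeff m j * polylog (2 j + 1) (-r)\<close>. Now let \<open>r \<rightarrow> 1\<close>: the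
  integrals converge by dominated convergence (\<open>sin x \<ge> x / pi\<close> bounds the integrand by a
  constant minus a multiple of \<open>ln x\<close>), the polylogarithms are continuous on \<open>[-1, 1]\<close>, and
  \<open>polylog s (-1) = - \<eta>(s)\<close>. Hence
  \<open>\<integral> x ^ (2 m) ln (2 sin x) = \<Sum>j=1..m. log_sine_coeff m j * \<eta>(2 j + 1)\<close>, and subtracting
  \<open>ln 2 \<integral> x ^ (2 m)\<close> supplies the term \<open>j = 0\<close> because \<open>\<eta>(1) = ln 2\<close>.\<close>

fun cos_moment :: "real \<Rightarrow> real \<Rightarrow> nat \<Rightarrow> real"
  and sin_moment :: "real \<Rightarrow> real \<Rightarrow> nat \<Rightarrow> real" where
  "cos_moment w b 0 = sin (w * b) / w"
| "sin_moment w b 0 = (1 - cos (w * b)) / w"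
| "cos_moment w b (Suc n) = b ^ Suc n * sin (w * b) / w - real (Suc n) / w * sin_moment w b n"
| "sin_moment w b (Suc n) = real (Suc n) / w * cos_moment w b n - b ^ Suc n * cos (w * b) / w"

lemma has_integral_cos_moment_Suc:
  fixes w b :: real
  assumes "w \<noteq> 0" "0 \<le> b"
    and IH: "((\<lambda>x. x ^ n * sin (w * x)) has_integral sin_moment w b n) {0..b}"
  shows "((\<lambda>x. x ^ Suc n * cos (w * x)) has_integral cos_moment w b (Suc n)) {0..b}"
proof -
  have "((\<lambda>x. cos (w * x) * x ^ Suc n) has_integral cos_moment w b (Suc n)) {0..b}"
  proof (rule integration_by_parts[OF bounded_bilinear_mult assms(2),
        of "\<lambda>x. sin (w * x) / w" "\<lambda>x. x ^ Suc n"])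
    have "(\<lambda>x. sin (w * x) / w * (real (Suc n) * x ^ n)) =
          (\<lambda>x. real (Suc n) / w * (x ^ n * sin (w * x)))"
      by (simp add: fun_eq_iff)
    moreover have "sin (w * b) / w * b ^ Suc n - sin (w * 0) / w * 0 ^ Suc n
        - cos_moment w b (Suc n) = real (Suc n) / w * sin_moment w b n"
      by simp
    ultimately show "((\<lambda>x. sin (w * x) / w * (real (Suc n) * x ^ n)) has_integral
        sin (w * b) / w * b ^ Suc n - sin (w * 0) / w * 0 ^ Suc n - cos_moment w b (Suc n)) {0..b}"
      using has_integral_mult_right[OF IH] by (simp only:)
    show "continuous_on {0..b} (\<lambda>x. sin (w * x) / w)" "continuous_on {0..b} (\<lambda>x. x ^ Suc n)"
      using assms(1) by (auto intro!: continuous_intros)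
    show "((\<lambda>x. sin (w * x) / w) has_vector_derivative cos (w * x)) (at x)" for x
      using assms(1) by (auto intro!: derivative_eq_intros
          simp: has_real_derivative_iff_has_vector_derivative[symmetric])
    show "((\<lambda>x. x ^ Suc n) has_vector_derivative (real (Suc n) * x ^ n)) (at x)" for x
      using DERIV_pow[of "Suc n" x] by (simp add: has_real_derivative_iff_has_vector_derivative)
  qed
  then show ?thesis by (simp add: mult.commute)
qed

lemma has_integral_sin_moment_Suc:
  fixes w b :: real
  assumes "w \<noteq> 0" "0 \<le> b"
    and IH: "((\<lambda>x. x ^ n * cos (w * x)) has_integral cos_moment w b n) {0..b}"
  shows "((\<lambda>x. x ^ Suc n * sin (w * x)) has_integral sin_moment w b (Suc n)) {0..b}"
proof -
  have "((\<lambda>x. sin (w * x) * x ^ Suc n) has_integral sin_moment w b (Suc n)) {0..b}"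
  proof (rule integration_by_parts[OF bounded_bilinear_mult assms(2),
        of "\<lambda>x. - cos (w * x) / w" "\<lambda>x. x ^ Suc n"])
    have "(\<lambda>x. - cos (w * x) / w * (real (Suc n) * x ^ n)) =
          (\<lambda>x. (- real (Suc n) / w) * (x ^ n * cos (w * x)))"
      using assms(1) by (simp add: fun_eq_iff field_simps)
    moreover have "- cos (w * b) / w * b ^ Suc n - - cos (w * 0) / w * 0 ^ Suc n
        - sin_moment w b (Suc n) = (- real (Suc n) / w) * cos_moment w b n"
      using assms(1) by (simp add: field_simps)
    ultimately show "((\<lambda>x. - cos (w * x) / w * (real (Suc n) * x ^ n)) has_integral
        - cos (w * b) / w * b ^ Suc n - - cos (w * 0) / w * 0 ^ Suc n - sin_moment w b (Suc n)) {0..b}"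
      using has_integral_mult_right[OF IH] by (simp only:)
    show "continuous_on {0..b} (\<lambda>x. - cos (w * x) / w)" "continuous_on {0..b} (\<lambda>x. x ^ Suc n)"
      using assms(1) by (auto intro!: continuous_intros)
    show "((\<lambda>x. - cos (w * x) / w) has_vector_derivative sin (w * x)) (at x)" for x
      using assms(1) by (auto intro!: derivative_eq_intros
          simp: has_real_derivative_iff_has_vector_derivative[symmetric])
    show "((\<lambda>x. x ^ Suc n) has_vector_derivative (real (Suc n) * x ^ n)) (at x)" for x
      using DERIV_pow[of "Suc n" x] by (simp add: has_real_derivative_iff_has_vector_derivative)
  qed
  then show ?thesis by (simp add: mult.commute)
qed

lemma has_integral_moments:
  fixes w b :: real
  assumes "w \<noteq> 0" "0 \<le> b"
  shows "((\<lambda>x. x ^ n * cos (w * x)) has_integral cos_moment w b n) {0..b} \<and>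
         ((\<lambda>x. x ^ n * sin (w * x)) has_integral sin_moment w b n) {0..b}"
proof (induction n)
  case 0
  have sin_deriv: "((\<lambda>x. sin (w * x) / w) has_vector_derivative cos (w * x)) (at x)"
    and cos_deriv: "((\<lambda>x. - cos (w * x) / w) has_vector_derivative sin (w * x)) (at x)" for x
    using assms(1) by (auto intro!: derivative_eq_intros
        simp: has_real_derivative_iff_has_vector_derivative[symmetric])
  have "((\<lambda>x. cos (w * x)) has_integral (sin (w * b) / w - sin (w * 0) / w)) {0..b}"
    using assms(2) sin_deriv
    by (intro fundamental_theorem_of_calculus) (auto intro: has_vector_derivative_at_within)
  moreover have "((\<lambda>x. sin (w * x)) has_integral (- cos (w * b) / w - (- cos (w * 0) / w))) {0..b}"
    using assms(2) cos_deriv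
    by (intro fundamental_theorem_of_calculus) (auto intro: has_vector_derivative_at_within)
  ultimately show ?case by (simp add: diff_divide_distrib)
next
  case (Suc n)
  then show ?case using assms has_integral_cos_moment_Suc has_integral_sin_moment_Suc by blast
qed

lemma cos_moment_half_pi_Suc_Suc:
  assumes "k \<noteq> 0"
  shows "cos_moment (2 * real k) (pi / 2) (Suc (Suc n)) =
     real (Suc (Suc n)) * (-1) ^ k * (pi / 2) ^ Suc n / (2 * real k) ^ 2
     - real (Suc (Suc n)) * real (Suc n) / (2 * real k) ^ 2 * cos_moment (2 * real k) (pi / 2) n"
proof -
  have "2 * real k * (pi / 2) = real k * pi" by simp
  then show ?thesis using assms by (simp add: power2_eq_square field_simps)
qed

definition log_sine_coeff :: "nat \<Rightarrow> nat \<Rightarrow> real" where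
  "log_sine_coeff m j = (-1) ^ (j + 1) * fact (2 * m) / (2 ^ (2 * j) * fact (2 * m - 2 * j + 1))
     * (pi / 2) ^ (2 * m - 2 * j + 1)"

lemma log_sine_coeff_Suc_one: "log_sine_coeff (Suc m) 1 = real (2 * m + 2) * (pi / 2) ^ (2 * m + 1) / 4"
proof -
  have "(fact (2 * Suc m) :: real) = real (2 * m + 2) * fact (2 * m + 1)"
    using fact_Suc[of "2 * m + 1"] by (simp add: algebra_simps)
  then show ?thesis by (simp add: log_sine_coeff_def)
qed

lemma log_sine_coeff_Suc_Suc:
  assumes "j \<le> m"
  shows "log_sine_coeff (Suc m) (Suc j) = - real (2 * m + 2) * real (2 * m + 1) / 4 * log_sine_coeff m j"
proof -
  define F where "F = (fact (2 * m - 2 * j + 1) :: real)"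
  define P where "P = (pi / 2) ^ (2 * m - 2 * j + 1)"
  have fact_eq: "(fact (2 * Suc m) :: real) = real (2 * m + 2) * real (2 * m + 1) * fact (2 * m)"
    using fact_Suc[of "2 * m + 1"] fact_Suc[of "2 * m"] by (simp add: algebra_simps)
  have "2 * Suc m - 2 * Suc j + 1 = 2 * m - 2 * j + 1" using assms by simp
  then have lhs: "log_sine_coeff (Suc m) (Suc j) =
      (-1) ^ (j + 2) * fact (2 * Suc m) / (2 ^ (2 * Suc j) * F) * P"
    by (simp add: log_sine_coeff_def F_def P_def)
  have rhs: "log_sine_coeff m j = (-1) ^ (j + 1) * fact (2 * m) / (2 ^ (2 * j) * F) * P"
    by (simp add: log_sine_coeff_def F_def P_def)
  have "F \<noteq> 0" by (simp add: F_def)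
  then show ?thesis unfolding lhs rhs fact_eq by (simp add: field_simps)
qed

lemma cos_moment_half_pi_even:
  assumes "k \<noteq> 0"
  shows "cos_moment (2 * real k) (pi / 2) (2 * m) =
    (-1) ^ k * (\<Sum>j = 1..m. log_sine_coeff m j / real k ^ (2 * j))"
proof (induction m)
  case 0
  have "2 * real k * (pi / 2) = real k * pi" by simp
  then show ?case by simp
next
  case (Suc m)
  have shift: "(\<Sum>j = 1..Suc m. log_sine_coeff (Suc m) j / real k ^ (2 * j)) =
      log_sine_coeff (Suc m) 1 / real k ^ 2
      + (\<Sum>j = 1..m. log_sine_coeff (Suc m) (Suc j) / real k ^ (2 * Suc j))"
    by (subst sum.atLeast_Suc_atMost) (simp_all only: sum.shift_bounds_cl_Suc_ivl, simp_all)
  have tail: "(\<Sum>j = 1..m. log_sine_coeff (Suc m) (Suc j) / real k ^ (2 * Suc j)) =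
      - real (2 * m + 2) * real (2 * m + 1) / (4 * real k ^ 2)
      * (\<Sum>j = 1..m. log_sine_coeff m j / real k ^ (2 * j))"
    unfolding sum_distrib_left
    by (intro sum.cong refl) (simp add: log_sine_coeff_Suc_Suc power_add power2_eq_square)
  have "cos_moment (2 * real k) (pi / 2) (2 * Suc m) =
      real (2 * m + 2) * (-1) ^ k * (pi / 2) ^ (2 * m + 1) / (2 * real k) ^ 2
      - real (2 * m + 2) * real (2 * m + 1) / (2 * real k) ^ 2 * cos_moment (2 * real k) (pi / 2) (2 * m)"
    using cos_moment_half_pi_Suc_Suc[OF assms, of "2 * m"] by simp
  then show ?case
    unfolding Suc.IH shift tail log_sine_coeff_Suc_one using assms
    by (simp add: power_mult_distrib field_simps)
qed

lemma log_series_cos: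
  fixes r \<theta> :: real
  assumes "\<bar>r\<bar> < 1"
  shows "(\<lambda>n. r ^ n * cos (real n * \<theta>) / real n) sums (- ln (1 - 2 * r * cos \<theta> + r\<^sup>2) / 2)"
proof -
  define z where "z = - rcis r \<theta>"
  have z_lt_1: "cmod z < 1" using assms by (simp add: z_def)
  have "(\<lambda>n. Re (- ((-z) ^ n) / of_nat n)) sums Re (ln (1 + z))"
    using Ln_series'[OF z_lt_1] by (rule sums_Re)
  moreover have "(\<lambda>n. Re (- ((-z) ^ n) / of_nat n)) = (\<lambda>n. - (r ^ n * cos (real n * \<theta>) / real n))"
    by (simp add: fun_eq_iff z_def DeMoivre2 Re_divide_of_nat)
  moreover have "1 + z \<noteq> 0"
    using z_lt_1 by (metis add.inverse_unique norm_minus_cancel norm_one order_less_irrefl)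
  moreover have "ln (1 - 2 * r * cos \<theta> + r\<^sup>2) / 2 = ln (cmod (1 + z))"
  proof -
    have "(cmod (1 + z))\<^sup>2 = (1 - r * cos \<theta>)\<^sup>2 + (r * sin \<theta>)\<^sup>2"
      by (simp add: cmod_power2 z_def rcis_def)
    also have "\<dots> = 1 - 2 * r * cos \<theta> + r\<^sup>2 * ((sin \<theta>)\<^sup>2 + (cos \<theta>)\<^sup>2)"
      by algebra
    finally show ?thesis using \<open>1 + z \<noteq> 0\<close> ln_realpow[of "cmod (1 + z)" 2] by simp
  qed
  ultimately have "(\<lambda>n. - (r ^ n * cos (real n * \<theta>) / real n)) sums (ln (1 - 2 * r * cos \<theta> + r\<^sup>2) / 2)"
    by simp
  then show ?thesis using sums_minus by fastforce
qed

lemma log_series_term_has_integral: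
  assumes "0 \<le> b"
  shows "((\<lambda>x. x ^ k * (r ^ n * cos (real n * (2 * x)) / real n)) has_integral
          r ^ n * cos_moment (2 * real n) b k / real n) {0..b}"
proof (cases "n = 0")
  case False
  then have "((\<lambda>x. x ^ k * cos (2 * real n * x)) has_integral cos_moment (2 * real n) b k) {0..b}"
    using assms has_integral_moments by auto
  from has_integral_mult_right[OF this, of "r ^ n / real n"] show ?thesis
    by (simp add: mult_ac)
qed simp

lemma log_series_moment_has_integral:
  fixes r b :: real
  assumes "\<bar>r\<bar> < 1" "0 \<le> b"
  shows "((\<lambda>x. x ^ k * (- ln (1 - 2 * r * cos (2 * x) + r\<^sup>2) / 2)) has_integral
          (\<Sum>n. r ^ n * cos_moment (2 * real n) b k / real n)) {0..b}"
proof -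
  define f where "f n x = x ^ k * (r ^ n * cos (real n * (2 * x)) / real n)" for n x
  have "uniform_limit {0..b} (\<lambda>N x. \<Sum>n<N. f n x) (\<lambda>x. \<Sum>n. f n x) sequentially"
  proof (rule Weierstrass_m_test)
    show "summable (\<lambda>n. b ^ k * \<bar>r\<bar> ^ n)"
      using assms(1) by (intro summable_mult summable_geometric) auto
    fix n x assume "x \<in> {0..b}"
    then have "\<bar>x\<bar> ^ k \<le> b ^ k" by (intro power_mono) auto
    have "\<bar>cos (real n * (2 * x)) / real n\<bar> \<le> 1"
      by (cases "n = 0") (auto simp: divide_le_eq intro: order_trans[OF abs_cos_le_one])
    have "norm (f n x) = \<bar>x\<bar> ^ k * (\<bar>r\<bar> ^ n * \<bar>cos (real n * (2 * x)) / real n\<bar>)"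
      unfolding f_def by (simp add: abs_mult power_abs)
    also have "\<dots> \<le> b ^ k * (\<bar>r\<bar> ^ n * 1)"
      using \<open>\<bar>x\<bar> ^ k \<le> b ^ k\<close> \<open>\<bar>cos (real n * (2 * x)) / real n\<bar> \<le> 1\<close> assms(2)
      by (intro mult_mono mult_left_mono) auto
    finally show "norm (f n x) \<le> b ^ k * \<bar>r\<bar> ^ n" by simp
  qed
  moreover have "continuous_on {0..b} (\<lambda>x. \<Sum>n<N. f n x)" for N
    unfolding f_def divide_inverse by (intro continuous_intros)
  ultimately obtain I J where
    I: "\<And>N. ((\<lambda>x. \<Sum>n<N. f n x) has_integral I N) {0..b}" and
    J: "((\<lambda>x. \<Sum>n. f n x) has_integral J) {0..b}" and
    I_J: "I \<longlonglongrightarrow> J"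
    by (rule uniform_limit_integral) auto
  have "((\<lambda>x. \<Sum>n<N. f n x) has_integral (\<Sum>n<N. r ^ n * cos_moment (2 * real n) b k / real n)) {0..b}"
    for N unfolding f_def using assms(2) by (intro has_integral_sum finite_lessThan log_series_term_has_integral)
  then have "I = (\<lambda>N. \<Sum>n<N. r ^ n * cos_moment (2 * real n) b k / real n)"
    using I by (auto intro: has_integral_unique)
  with I_J have "(\<lambda>n. r ^ n * cos_moment (2 * real n) b k / real n) sums J"
    by (simp add: sums_def)
  moreover have "(\<Sum>n. f n x) = x ^ k * (- ln (1 - 2 * r * cos (2 * x) + r\<^sup>2) / 2)" for x
    unfolding f_def using sums_mult[OF log_series_cos[OF assms(1)]] by (rule sums_unique[symmetric])
  ultimately show ?thesis using J by (simp add: sums_iff)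
qed

text \<open>For \<open>s > 0\<close> the summand at \<open>n = 0\<close> is \<open>x ^ 0 / 0 = 0\<close>, so this is the usual
  \<open>\<Sum>n\<ge>1. x ^ n / n ^ s\<close>.\<close>

definition polylog :: "nat \<Rightarrow> real \<Rightarrow> real" where
  "polylog s x = (\<Sum>n. x ^ n / real n ^ s)"

lemma norm_polylog_term_le:
  assumes "\<bar>x\<bar> \<le> 1"
  shows "norm (x ^ n / real n ^ s) \<le> inverse (real n ^ s)"
proof -
  have "\<bar>x\<bar> ^ n \<le> 1" using assms by (intro power_le_one) auto
  then have "\<bar>x\<bar> ^ n / real n ^ s \<le> 1 / real n ^ s" by (intro divide_right_mono) auto
  then show ?thesis by (simp add: abs_mult power_abs divide_inverse)
qed

lemma summable_polylog:
  assumes "2 \<le> s" "\<bar>x\<bar> \<le> 1"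
  shows "summable (\<lambda>n. x ^ n / real n ^ s)"
  using norm_polylog_term_le[OF assms(2)]
  by (intro summable_comparison_test[OF _ inverse_power_summable[OF assms(1)]]) auto

lemma continuous_on_polylog:
  assumes "2 \<le> s"
  shows "continuous_on {-1..1} (polylog s)"
proof (rule uniform_limit_theorem)
  show "uniform_limit {-1..1} (\<lambda>N x. \<Sum>n<N. x ^ n / real n ^ s) (polylog s) sequentially"
    unfolding polylog_def[abs_def]
    using norm_polylog_term_le inverse_power_summable[OF assms]
    by (intro Weierstrass_m_test) auto
qed (auto simp: divide_inverse intro!: always_eventually continuous_intros)

lemma polylog_minus_one:
  assumes "2 \<le> s"
  shows "polylog s (-1) = - dirichlet_eta (real s)"
proof -
  have "(\<lambda>n. (-1) ^ n / real n ^ s) sums polylog s (-1)"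
    unfolding polylog_def using summable_polylog[OF assms] by (intro summable_sums) auto
  then have "(\<lambda>n. (-1) ^ Suc n / real (Suc n) ^ s) sums polylog s (-1)"
    using assms by (subst sums_Suc_iff) (simp add: power_0_left)
  then have "(\<lambda>n. (-1) ^ n / real (Suc n) powr real s) sums (- polylog s (-1))"
    using sums_minus by (fastforce simp: powr_realpow)
  then show ?thesis unfolding dirichlet_eta_def by (simp add: sums_iff)
qed

lemma log_series_half_pi_term_eq:
  "r ^ n * cos_moment (2 * real n) (pi / 2) (2 * m) / real n =
    (\<Sum>j = 1..m. log_sine_coeff m j * ((-r) ^ n / real n ^ (2 * j + 1)))"
proof (cases "n = 0")
  case False
  then show ?thesis
    unfolding cos_moment_half_pi_even[OF False] sum_distrib_left sum_divide_distrib
    by (intro sum.cong refl) (simp add: power_minus' power_add field_simps)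
qed simp

lemma sums_log_series_half_pi:
  assumes "\<bar>r\<bar> \<le> 1"
  shows "(\<lambda>n. r ^ n * cos_moment (2 * real n) (pi / 2) (2 * m) / real n) sums
    (\<Sum>j = 1..m. log_sine_coeff m j * polylog (2 * j + 1) (-r))"
  unfolding log_series_half_pi_term_eq polylog_def using assms
  by (intro sums_sum sums_mult summable_sums summable_polylog) auto

lemma log_series_moment_half_pi_has_integral:
  assumes "\<bar>r\<bar> < 1"
  shows "((\<lambda>x. x ^ (2 * m) * (ln (1 - 2 * r * cos (2 * x) + r\<^sup>2) / 2)) has_integral
     - (\<Sum>j = 1..m. log_sine_coeff m j * polylog (2 * j + 1) (-r))) {0..pi / 2}"
proof -
  have "(\<Sum>n. r ^ n * cos_moment (2 * real n) (pi / 2) (2 * m) / real n) =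
      (\<Sum>j = 1..m. log_sine_coeff m j * polylog (2 * j + 1) (-r))"
    using sums_log_series_half_pi assms by (auto intro: sums_unique[symmetric])
  then show ?thesis
    using has_integral_neg[OF log_series_moment_has_integral[OF assms, of "pi / 2" "2 * m"]] by simp
qed

lemma ln_has_integral:
  fixes b :: real
  assumes "0 < b"
  shows "(ln has_integral (b * ln b - b)) {0..b}"
proof -
  have "continuous_on {0..b} (\<lambda>x. x * ln x - x)"
    unfolding continuous_on_eq_continuous_within
  proof
    fix x :: real assume "x \<in> {0..b}"
    show "continuous (at x within {0..b}) (\<lambda>x. x * ln x - x)"
    proof (cases "x = 0")
      case True
      have "((\<lambda>x. x * ln x - x) \<longlongrightarrow> 0) (at_right (0::real))" by real_asymp
      then show ?thesis using True assms by (simp add: continuous_within at_within_Icc_at_right)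
    next
      case False
      with \<open>x \<in> {0..b}\<close> have "isCont (\<lambda>x. x * ln x - x) x" by (intro continuous_intros) auto
      then show ?thesis by (rule continuous_at_imp_continuous_at_within)
    qed
  qed
  moreover have "((\<lambda>x. x * ln x - x) has_vector_derivative ln x) (at x)" if "x \<in> {0<..<b}" for x
    using that by (auto intro!: derivative_eq_intros
        simp: has_real_derivative_iff_has_vector_derivative[symmetric])
  ultimately have "(ln has_integral ((b * ln b - b) - (0 * ln 0 - 0))) {0..b}"
    using assms by (intro fundamental_theorem_of_calculus_interior) auto
  then show ?thesis by simp
qed

lemma sin_ge_x_cos:
  fixes x :: real
  assumes "0 < x" "x \<le> pi"
  shows "x * cos x \<le> sin x"
proof -
  obtain z where z: "0 < z" "z < x" "sin x - sin 0 = (x - 0) * cos z"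
    using MVT2[OF assms(1), of sin cos] by (auto intro: DERIV_sin)
  have "cos x \<le> cos z" using z assms by (intro cos_monotone_0_pi_le) auto
  then show ?thesis using z assms by (simp add: mult_left_mono)
qed

lemma sin_ge_divide_pi:
  fixes x :: real
  assumes "0 < x" "x \<le> pi / 2"
  shows "x / pi \<le> sin x"
proof (cases "x \<le> pi / 3")
  case True
  have "cos (pi / 3) \<le> cos x" using True assms by (intro cos_monotone_0_pi_le) auto
  then have "x * (1 / 2) \<le> x * cos x" using assms by (intro mult_left_mono) (auto simp: cos_60)
  also have "\<dots> \<le> sin x" using assms by (intro sin_ge_x_cos) auto
  finally have "x / 2 \<le> sin x" by simp
  moreover have "x / pi \<le> x / 2" using assms pi_gt3 by (intro divide_left_mono) auto
  ultimately show ?thesis by linarith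
next
  case False
  have "sin (pi / 3) \<le> sin x" using False assms by (subst sin_mono_le_eq) auto
  then have "sqrt 3 / 2 \<le> sin x" by (simp add: sin_60)
  moreover have "1 \<le> sqrt 3" by simp
  moreover have "x / pi \<le> 1 / 2" using assms by (simp add: divide_simps)
  ultimately show ?thesis by linarith
qed

lemma poisson_denominator_eq:
  fixes r x :: real
  shows "1 - 2 * r * cos (2 * x) + r\<^sup>2 = (1 - r)\<^sup>2 + 4 * r * (sin x)\<^sup>2"
  unfolding cos_double_sin by (simp add: power2_eq_square algebra_simps)

lemma abs_ln_poisson_denominator_le:
  fixes r x :: real
  assumes r: "1 / 2 \<le> r" "r \<le> 1" and x: "0 < x" "x \<le> pi / 2"
  shows "\<bar>ln (1 - 2 * r * cos (2 * x) + r\<^sup>2) / 2\<bar> \<le> 2 + ln pi - ln x"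
proof -
  define Q where "Q = 1 - 2 * r * cos (2 * x) + r\<^sup>2"
  have Q_eq: "Q = (1 - r)\<^sup>2 + 4 * r * (sin x)\<^sup>2"
    unfolding Q_def by (rule poisson_denominator_eq)
  have "(x / pi)\<^sup>2 \<le> (sin x)\<^sup>2"
    using sin_ge_divide_pi[OF x] x by (intro power_mono) auto
  also have "\<dots> \<le> Q"
    unfolding Q_eq using r mult_right_mono[of 1 "4 * r" "(sin x)\<^sup>2"] by (intro add_increasing) auto
  finally have Q_lower: "(x / pi)\<^sup>2 \<le> Q" .
  have "(1 - r)\<^sup>2 \<le> 1" using r by (intro power_le_one) auto
  moreover have "4 * r * (sin x)\<^sup>2 \<le> 4"
    using r mult_mono[of "4 * r" 4 "(sin x)\<^sup>2" 1] by (simp add: abs_square_le_1)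
  ultimately have "Q \<le> 5" unfolding Q_eq by simp
  have "0 < (x / pi)\<^sup>2" using x by simp
  then have "ln Q \<le> Q - 1" using Q_lower by (intro ln_le_minus_one) linarith
  moreover have "2 * (ln x - ln pi) \<le> ln Q"
    using ln_mono[OF Q_lower \<open>0 < (x / pi)\<^sup>2\<close>] x by (simp add: ln_realpow ln_div)
  moreover have "ln x \<le> ln pi" using x by simp
  ultimately show ?thesis
    unfolding Q_def[symmetric] abs_le_iff using \<open>Q \<le> 5\<close> by (simp add: field_simps)
qed

lemma log_two_sin_moment_Abel_limit:
  fixes r y :: "nat \<Rightarrow> real"
  assumes int: "\<And>N. ((\<lambda>x. x ^ k * (ln (1 - 2 * r N * cos (2 * x) + (r N)\<^sup>2) / 2)) has_integral y N)
      {0..pi / 2}"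
    and r: "\<And>N. 1 / 2 \<le> r N \<and> r N \<le> 1" and "r \<longlonglongrightarrow> 1" and "y \<longlonglongrightarrow> L"
  shows "((\<lambda>x. x ^ k * ln (2 * sin x)) has_integral L) {0..pi / 2}"
proof -
  define h where "h x = (pi / 2) ^ k * (2 + ln pi - ln x)" for x
  have "ln integrable_on {0..pi / 2}"
    using ln_has_integral[of "pi / 2"] by (auto simp: integrable_on_def)
  then have "(\<lambda>x. 2 + ln pi - ln x) integrable_on {0..pi / 2}"
    by (intro integrable_diff integrable_const_ivl)
  then have h_int: "h integrable_on {0<..<pi / 2}"
    unfolding h_def integrable_on_Icc_iff_Ioo[symmetric] by simp
  have bound: "norm (x ^ k * (ln (1 - 2 * r N * cos (2 * x) + (r N)\<^sup>2) / 2)) \<le> h x"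
    if "x \<in> {0<..<pi / 2}" for N x
  proof -
    have "\<bar>x\<bar> ^ k \<le> (pi / 2) ^ k" using that by (intro power_mono) auto
    moreover have "\<bar>ln (1 - 2 * r N * cos (2 * x) + (r N)\<^sup>2) / 2\<bar> \<le> 2 + ln pi - ln x"
      using r[of N] that by (intro abs_ln_poisson_denominator_le) auto
    ultimately show ?thesis unfolding h_def real_norm_def abs_mult power_abs
      by (intro mult_mono) auto
  qed
  have conv: "(\<lambda>N. x ^ k * (ln (1 - 2 * r N * cos (2 * x) + (r N)\<^sup>2) / 2)) \<longlonglongrightarrow> x ^ k * ln (2 * sin x)"
    if "x \<in> {0<..<pi / 2}" for x
  proof -
    have "0 < sin x" using that by (intro sin_gt_zero) auto
    have at_one: "1 - 2 * 1 * cos (2 * x) + 1\<^sup>2 = (2 * sin x)\<^sup>2"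
      unfolding poisson_denominator_eq by (simp add: power_mult_distrib)
    then have "1 - 2 * 1 * cos (2 * x) + 1\<^sup>2 \<noteq> 0" using \<open>0 < sin x\<close> by simp
    then have "(\<lambda>N. x ^ k * (ln (1 - 2 * r N * cos (2 * x) + (r N)\<^sup>2) / 2))
        \<longlonglongrightarrow> x ^ k * (ln (1 - 2 * 1 * cos (2 * x) + 1\<^sup>2) / 2)"
      by (intro tendsto_intros \<open>r \<longlonglongrightarrow> 1\<close>) simp_all
    moreover have "ln ((2 * sin x)\<^sup>2) / 2 = ln (2 * sin x)"
      using \<open>0 < sin x\<close> by (subst ln_realpow) auto
    ultimately show ?thesis unfolding at_one by simp
  qed
  have "((\<lambda>x. x ^ k * ln (2 * sin x)) has_integral L) {0<..<pi / 2}"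
  proof (rule has_integral_dominated_convergence[OF _ h_int _ _ \<open>y \<longlonglongrightarrow> L\<close>])
    show "((\<lambda>x. x ^ k * (ln (1 - 2 * r N * cos (2 * x) + (r N)\<^sup>2) / 2)) has_integral y N) {0<..<pi / 2}"
      for N using int[of N] by (simp only: has_integral_Icc_iff_Ioo)
  qed (use bound conv in blast)+
  then show ?thesis by (simp add: has_integral_Icc_iff_Ioo)
qed

lemma log_two_sin_moment_has_integral:
  "((\<lambda>x. x ^ (2 * m) * ln (2 * sin x)) has_integral
     (\<Sum>j = 1..m. log_sine_coeff m j * dirichlet_eta (real (2 * j + 1)))) {0..pi / 2}"
proof -
  define r where "r N = 1 - 1 / real (N + 2)" for N
  have r_bounds: "1 / 2 \<le> r N \<and> r N < 1" for N
    by (simp add: r_def field_simps)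
  have r_in: "- r N \<in> {-1..1}" for N
    using r_bounds[of N] by auto
  have r_lim: "r \<longlonglongrightarrow> 1"
    unfolding r_def by real_asymp
  then have "(\<lambda>N. polylog (2 * j + 1) (- r N)) \<longlonglongrightarrow> polylog (2 * j + 1) (-1)" if "j \<in> {1..m}" for j
    using that r_in
    by (intro continuous_on_tendsto_compose[OF continuous_on_polylog] tendsto_minus always_eventually) auto
  then have "(\<lambda>N. - (\<Sum>j = 1..m. log_sine_coeff m j * polylog (2 * j + 1) (- r N))) \<longlonglongrightarrow>
      - (\<Sum>j = 1..m. log_sine_coeff m j * polylog (2 * j + 1) (-1))"
    by (intro tendsto_intros) auto
  moreover have "\<bar>r N\<bar> < 1" for N using r_bounds[of N] by auto
  ultimately have "((\<lambda>x. x ^ (2 * m) * ln (2 * sin x)) has_integral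
      - (\<Sum>j = 1..m. log_sine_coeff m j * polylog (2 * j + 1) (-1))) {0..pi / 2}"
    using r_bounds r_lim less_imp_le
    by (intro log_two_sin_moment_Abel_limit[OF log_series_moment_half_pi_has_integral]) auto
  moreover have "polylog (2 * j + 1) (-1) = - dirichlet_eta (real (2 * j + 1))" if "j \<in> {1..m}" for j
    using that by (intro polylog_minus_one) auto
  ultimately show ?thesis by (simp add: sum_negf)
qed

lemma dirichlet_eta_one: "dirichlet_eta 1 = ln 2"
  using alternating_harmonic_series_sums by (simp add: dirichlet_eta_def sums_iff)

lemma power_has_integral:
  fixes b :: real
  assumes "0 \<le> b"
  shows "((\<lambda>x. x ^ n) has_integral b ^ Suc n / real (Suc n)) {0..b}"
proof -
  have "((\<lambda>x. x ^ Suc n / real (Suc n)) has_real_derivative x ^ n) (at x)" for x :: real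
    using DERIV_cdivide[OF DERIV_pow[of "Suc n" x], of "real (Suc n)"] by simp
  then have "((\<lambda>x. x ^ n) has_integral (b ^ Suc n / real (Suc n) - 0 ^ Suc n / real (Suc n))) {0..b}"
    using assms by (intro fundamental_theorem_of_calculus)
      (auto simp: has_real_derivative_iff_has_vector_derivative intro: has_vector_derivative_at_within)
  then show ?thesis by simp
qed

lemma log_sine_coeff_zero: "log_sine_coeff m 0 = - ((pi / 2) ^ Suc (2 * m) / real (Suc (2 * m)))"
  by (simp add: log_sine_coeff_def)

theorem mainTheorem10:
  fixes m :: nat
  shows "((\<lambda>x::real. x ^ (2 * m) * ln (sin x)) has_integral
     (fact (2 * m) * (\<Sum>j = 0..m. (-1) ^ (j + 1) * dirichlet_eta (real (2 * j + 1))
        / (2 ^ (2 * j) * fact (2 * m - 2 * j + 1)) * (pi / 2) ^ (2 * m - 2 * j + 1)))) {0..pi/2}"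
proof -
  have "((\<lambda>x. x ^ (2 * m) * ln (2 * sin x) - ln 2 * x ^ (2 * m)) has_integral
      (\<Sum>j = 1..m. log_sine_coeff m j * dirichlet_eta (real (2 * j + 1)))
      - ln 2 * ((pi / 2) ^ Suc (2 * m) / real (Suc (2 * m)))) {0..pi / 2}"
    by (intro has_integral_diff log_two_sin_moment_has_integral has_integral_mult_right power_has_integral)
      simp
  moreover have "x ^ (2 * m) * ln (2 * sin x) - ln 2 * x ^ (2 * m) = x ^ (2 * m) * ln (sin x)"
    if "x \<in> {0<..<pi / 2}" for x
    using that sin_gt_zero[of x] by (simp add: ln_mult algebra_simps)
  ultimately have "((\<lambda>x. x ^ (2 * m) * ln (sin x)) has_integral
      (\<Sum>j = 1..m. log_sine_coeff m j * dirichlet_eta (real (2 * j + 1)))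
      - ln 2 * ((pi / 2) ^ Suc (2 * m) / real (Suc (2 * m)))) {0..pi / 2}"
    unfolding has_integral_Icc_iff_Ioo by (rule has_integral_eq[rotated])
  also have "(\<Sum>j = 1..m. log_sine_coeff m j * dirichlet_eta (real (2 * j + 1)))
      - ln 2 * ((pi / 2) ^ Suc (2 * m) / real (Suc (2 * m)))
      = (\<Sum>j = 0..m. log_sine_coeff m j * dirichlet_eta (real (2 * j + 1)))"
    by (simp add: sum.atLeast_Suc_atMost log_sine_coeff_zero dirichlet_eta_one)
  also have "\<dots> = fact (2 * m) * (\<Sum>j = 0..m. (-1) ^ (j + 1) * dirichlet_eta (real (2 * j + 1))
        / (2 ^ (2 * j) * fact (2 * m - 2 * j + 1)) * (pi / 2) ^ (2 * m - 2 * j + 1))"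
    unfolding sum_distrib_left by (intro sum.cong refl) (simp add: log_sine_coeff_def)
  finally show ?thesis .
qed

end
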